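(* Let $(\mathcal T(n))_{n\in\mathbb N}$ be the triangle Markov chain obtained by iterated random barycentric subdivision started from an arbitrary triangle, and let $J_n=J(\mathcal T(n))$. Then almost surely $\limsup_{n\to\infty}J_n=+\infty$.
   Context: A triangle is given by three points of the plane which are not all equal. Barycentric subdivision: if a triangle has vertices $A,B,C$, let $D,E,F$ be the midpoints of $[A,B],[B,C],[C,A]$ and $G$ its barycenter; the medians cut it into the six triangles $\{A,D,G\},\{D,B,G\},\{B,E,G\},\{E,C,G\},\{C,F,G\},\{F,A,G\}$. The triangle Markov chain: $\mathcal T(0)$ is given and $\mathcal T(n+1)$ is chosen uniformly among the six triangles of the barycentric subdivision of $\mathcal T(n)$, independently of the past. For a triangle $\mathcal T$, $J(\mathcal T)\in(0,+\infty]$ is the sum of the squares of the lengths of its three edges divided by its area (with $J(\mathcal T)=+\infty$ iff $\mathcal T$ is flat, i.e. has zero area). *)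

theory Defs
  imports "HOL-Probability.Probability"
begin

type_synonym triangle = "complex \<times> complex \<times> complex"

definition nondegenerate_input :: "triangle \<Rightarrow> bool" where
  "nondegenerate_input T = (case T of (A, B, C) \<Rightarrow> \<not> (A = B \<and> B = C))"

text \<open>Area: half the absolute value of the cross product of B - A and C - A.\<close>
definition tri_area :: "triangle \<Rightarrow> real" where
  "tri_area T = (case T of (A, B, C) \<Rightarrow> \<bar>Im (cnj (B - A) * (C - A))\<bar> / 2)"

definition J :: "triangle \<Rightarrow> ereal" where
  "J T = (case T of (A, B, C) \<Rightarrow>
     (if tri_area T = 0 then \<infinity>
      else ereal (((cmod (B - A))\<^sup>2 + (cmod (C - B))\<^sup>2 + (cmod (A - C))\<^sup>2) / tri_area T)))"

definition subdiv :: "triangle \<Rightarrow> nat \<Rightarrow> triangle" where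
  "subdiv T i = (case T of (A, B, C) \<Rightarrow>
     (let D = (A + B) / 2; E = (B + C) / 2; F = (C + A) / 2; G = (A + B + C) / 3
      in [(A, D, G), (D, B, G), (B, E, G), (E, C, G), (C, F, G), (F, A, G)] ! i))"

text \<open>The triangle Markov chain, driven by an i.i.d. sequence of choices in {0..5}.\<close>
fun tri_chain :: "triangle \<Rightarrow> nat stream \<Rightarrow> nat \<Rightarrow> triangle" where
  "tri_chain T0 \<omega> 0 = T0"
| "tri_chain T0 \<omega> (Suc n) = subdiv (tri_chain T0 \<omega> n) (\<omega> !! n)"

definition choices :: "nat stream measure" where
  "choices = stream_space (measure_pmf (pmf_of_set {..<6::nat}))"

end

theory Submission
  imports Defs
begin

text \<open>
  Always choosing the corner triangle \<open>(A, D, G)\<close> halves the side \<open>AB\<close> and divides the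
  area by 6.  Hence if \<open>T'\<close> arises from \<open>T\<close> by \<open>n\<close> such choices, then
  \<open>J T \<ge> |AC|\<^sup>2 / area T\<close> and \<open>J T' \<ge> |AB|\<^sup>2 (3/2)\<^sup>n / area T\<close>, and since
  \<open>2 area T \<le> |AB| |AC|\<close> their product is at least \<open>4 (3/2)\<^sup>n\<close>: one of the two is large.
  With probability one the i.i.d. choice sequence contains runs of the symbol 0 of every length
  infinitely often, so \<open>J\<close> exceeds every bound infinitely often.
\<close>

lemma (in prob_space) prob_run_sdrop:
  assumes [measurable]: "A \<in> sets M" "Measurable.pred (stream_space M) R"
  shows "\<P>(\<omega> in stream_space M. (\<forall>i<n. \<omega> !! i \<in> A) \<and> R (sdrop n \<omega>)) =
    prob A ^ n * \<P>(\<omega> in stream_space M. R \<omega>)"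
proof (induction n)
  case 0
  show ?case by simp
next
  case (Suc n)
  have "ennreal (\<P>(\<omega> in stream_space M. (\<forall>i<Suc n. \<omega> !! i \<in> A) \<and> R (sdrop (Suc n) \<omega>)))
      = (\<integral>\<^sup>+t. \<P>(\<omega> in stream_space M. t \<in> A \<and> (\<forall>i<n. \<omega> !! i \<in> A) \<and> R (sdrop n \<omega>)) \<partial>M)"
    by (subst prob_stream_space) (simp_all add: All_less_Suc2)
  also have "\<dots> = (\<integral>\<^sup>+t. ennreal (prob A ^ n * \<P>(\<omega> in stream_space M. R \<omega>)) * indicator A t \<partial>M)"
    by (intro nn_integral_cong) (simp add: Suc split: split_indicator)
  also have "\<dots> = ennreal (prob A ^ Suc n * \<P>(\<omega> in stream_space M. R \<omega>))"
    by (subst nn_integral_cmult_indicator)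
       (simp_all add: emeasure_eq_measure ennreal_mult[symmetric] mult_ac)
  finally show ?case
    by simp
qed

lemma (in prob_space) prob_sdrop:
  assumes [measurable]: "Measurable.pred (stream_space M) R"
  shows "\<P>(\<omega> in stream_space M. R (sdrop n \<omega>)) = \<P>(\<omega> in stream_space M. R \<omega>)"
proof -
  have "{\<omega> \<in> space (stream_space M). (\<forall>i<n. \<omega> !! i \<in> space M) \<and> R (sdrop n \<omega>)} =
      {\<omega> \<in> space (stream_space M). R (sdrop n \<omega>)}"
    by (auto simp: space_stream_space streams_iff_snth)
  then show ?thesis
    using prob_run_sdrop[of "space M" R n] by (simp add: prob_space)
qed

lemma (in prob_space) prob_never_run:
  assumes [measurable]: "A \<in> sets M" and pos: "prob A > 0"
  shows "\<P>(\<omega> in stream_space M. \<forall>j. \<not> (\<forall>i<n. \<omega> !! (j + i) \<in> A)) = 0"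
proof -
  interpret S: prob_space "stream_space M"
    by (rule prob_space_stream_space)
  define R where "R \<omega> \<longleftrightarrow> (\<forall>j. \<not> (\<forall>i<n. \<omega> !! (j + i) \<in> A))" for \<omega>
  define run where "run \<omega> \<longleftrightarrow> (\<forall>i<n. \<omega> !! i \<in> A)" for \<omega>
  have [measurable]: "Measurable.pred (stream_space M) R" "Measurable.pred (stream_space M) run"
    unfolding R_def run_def by measurable
  \<comment> \<open>By independence of prefix and tail this gives \<open>P R \<le> (1 - prob A ^ n) * P R\<close>.\<close>
  have R_shift: "\<not> run \<omega> \<and> R (sdrop n \<omega>)" if "R \<omega>" for \<omega>
  proof
    show "\<not> run \<omega>"
      using that[unfolded R_def, rule_format, of 0] by (simp add: run_def)
    show "R (sdrop n \<omega>)"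
      using that[unfolded R_def, rule_format, of "n + _"] by (simp add: R_def sdrop_snth add.assoc)
  qed
  have "\<P>(\<omega> in stream_space M. R \<omega>) \<le> \<P>(\<omega> in stream_space M. \<not> run \<omega> \<and> R (sdrop n \<omega>))"
    using R_shift by (intro S.finite_measure_mono) auto
  also have "\<dots> = \<P>(\<omega> in stream_space M. R (sdrop n \<omega>)) - \<P>(\<omega> in stream_space M. run \<omega> \<and> R (sdrop n \<omega>))"
  proof -
    have "{\<omega> \<in> space (stream_space M). \<not> run \<omega> \<and> R (sdrop n \<omega>)} =
        {\<omega> \<in> space (stream_space M). R (sdrop n \<omega>)} -
        {\<omega> \<in> space (stream_space M). run \<omega> \<and> R (sdrop n \<omega>)}"
      by auto
    then show ?thesis
      by (simp only:) (rule S.finite_measure_Diff; auto)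
  qed
  also have "\<dots> = (1 - prob A ^ n) * \<P>(\<omega> in stream_space M. R \<omega>)"
    unfolding run_def by (simp add: prob_sdrop prob_run_sdrop algebra_simps)
  finally have "prob A ^ n * \<P>(\<omega> in stream_space M. R \<omega>) \<le> 0"
    by (simp add: algebra_simps)
  with pos show ?thesis
    unfolding R_def by (meson measure_nonneg order.antisym zero_less_power mult_le_0_iff not_le)
qed

lemma (in prob_space) AE_frequently_run:
  assumes [measurable]: "A \<in> sets M" and pos: "prob A > 0"
  shows "AE \<omega> in stream_space M. \<forall>n. \<exists>\<^sub>F k in sequentially. \<forall>i<n. \<omega> !! (k + i) \<in> A"
proof -
  interpret S: prob_space "stream_space M"
    by (rule prob_space_stream_space)
  have "AE \<omega> in stream_space M. \<exists>j. \<forall>i<n. \<omega> !! (m + j + i) \<in> A" for n m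
  proof -
    have "\<P>(\<omega> in stream_space M. \<forall>j. \<not> (\<forall>i<n. sdrop m \<omega> !! (j + i) \<in> A)) =
        \<P>(\<omega> in stream_space M. \<forall>j. \<not> (\<forall>i<n. \<omega> !! (j + i) \<in> A))"
      by (rule prob_sdrop) measurable
    also have "\<dots> = 0"
      using prob_never_run pos by simp
    finally have "\<P>(\<omega> in stream_space M. \<forall>j. \<not> (\<forall>i<n. sdrop m \<omega> !! (j + i) \<in> A)) = 0" .
    then show ?thesis
      by (subst (asm) S.prob_Collect_eq_0) (auto simp: sdrop_snth add.assoc)
  qed
  then have "AE \<omega> in stream_space M. \<forall>n m. \<exists>j. \<forall>i<n. \<omega> !! (m + j + i) \<in> A"
    by (simp add: AE_all_countable)
  then show ?thesis
    unfolding frequently_sequentially by eventually_elim (metis le_add1)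
qed

definition vec_AB :: "triangle \<Rightarrow> complex" where
  "vec_AB T = fst (snd T) - fst T"

definition vec_AC :: "triangle \<Rightarrow> complex" where
  "vec_AC T = snd (snd T) - fst T"

lemma tri_area_eq: "tri_area T = \<bar>Im (cnj (vec_AB T) * vec_AC T)\<bar> / 2"
  by (cases T) (simp add: tri_area_def vec_AB_def vec_AC_def)

lemma tri_area_nonneg: "0 \<le> tri_area T"
  by (simp add: tri_area_eq)

lemma tri_area_le_norm_mult: "2 * tri_area T \<le> cmod (vec_AB T) * cmod (vec_AC T)"
  using abs_Im_le_cmod[of "cnj (vec_AB T) * vec_AC T"] by (simp add: tri_area_eq norm_mult)

lemma J_ge_norm_vec:
  assumes "tri_area T \<noteq> 0"
  shows "ereal ((cmod (vec_AB T))\<^sup>2 / tri_area T) \<le> J T"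
    and "ereal ((cmod (vec_AC T))\<^sup>2 / tri_area T) \<le> J T"
proof -
  obtain A B C where T: "T = (A, B, C)" by (cases T)
  have "0 < tri_area T" using assms tri_area_nonneg[of T] by simp
  then show "ereal ((cmod (vec_AB T))\<^sup>2 / tri_area T) \<le> J T"
      "ereal ((cmod (vec_AC T))\<^sup>2 / tri_area T) \<le> J T"
    using assms by (auto simp: T J_def vec_AB_def vec_AC_def norm_minus_commute intro!: divide_right_mono)
qed

definition corner :: "triangle \<Rightarrow> triangle" where
  "corner T = subdiv T 0"

lemma corner_simps: "corner (A, B, C) = (A, (A + B) / 2, (A + B + C) / 3)"
  by (simp add: corner_def subdiv_def Let_def)

lemma vec_AB_corner: "vec_AB (corner T) = vec_AB T / 2"
  by (cases T) (simp add: corner_simps vec_AB_def field_simps)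

lemma tri_area_corner: "tri_area (corner T) = tri_area T / 6"
proof (cases T)
  case (fields A B C)
  have AC: "vec_AC (corner T) = (vec_AB T + vec_AC T) / 3"
    by (simp add: fields corner_simps vec_AB_def vec_AC_def field_simps)
  have cross: "Im (cnj (b / 2) * ((b + c) / 3)) = Im (cnj b * c) / 6" for b c :: complex
    by (simp add: algebra_simps)
  show ?thesis
    unfolding tri_area_eq vec_AB_corner AC cross by simp
qed

lemma vec_AB_corner_iterate: "vec_AB ((corner ^^ n) T) = vec_AB T / 2 ^ n"
  by (induction n) (simp_all add: vec_AB_corner)

lemma tri_area_corner_iterate: "tri_area ((corner ^^ n) T) = tri_area T / 6 ^ n"
  by (induction n) (simp_all add: tri_area_corner)

lemma J_eq_infinity: "tri_area T = 0 \<Longrightarrow> J T = \<infinity>"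
  by (cases T) (simp add: J_def)

lemma norm_vec_product_corner_iterate:
  assumes "tri_area T \<noteq> 0"
  shows "4 * (3/2) ^ n \<le>
    (cmod (vec_AC T))\<^sup>2 / tri_area T * ((cmod (vec_AB ((corner ^^ n) T)))\<^sup>2 / tri_area ((corner ^^ n) T))"
proof -
  define a b c where "a = tri_area T" and "b = cmod (vec_AB T)" and "c = cmod (vec_AC T)"
  have "0 < a"
    using assms tri_area_nonneg[of T] by (simp add: a_def)
  have "(2::real) ^ n * 2 ^ n * (3/2) ^ n = 6 ^ n"
    by (simp flip: power_mult_distrib)
  with \<open>0 < a\<close> have iterate: "(cmod (vec_AB ((corner ^^ n) T)))\<^sup>2 / tri_area ((corner ^^ n) T) = b\<^sup>2 * (3/2) ^ n / a"
    by (simp add: vec_AB_corner_iterate tri_area_corner_iterate norm_divide norm_power a_def b_def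
        field_simps power2_eq_square)
  have "(2 * a)\<^sup>2 \<le> (b * c)\<^sup>2"
    using tri_area_le_norm_mult[of T] \<open>0 < a\<close> by (intro power_mono) (simp_all add: a_def b_def c_def)
  then have "4 * a\<^sup>2 * (3/2) ^ n \<le> (b * c)\<^sup>2 * (3/2) ^ n"
    by (simp add: power_mult_distrib)
  with \<open>0 < a\<close> show ?thesis
    unfolding iterate by (simp add: a_def b_def c_def field_simps power2_eq_square)
qed

lemma J_or_J_corner_iterate_ge:
  assumes "0 < M" and "M\<^sup>2 < 4 * (3/2) ^ n"
  shows "ereal M \<le> J T \<or> ereal M \<le> J ((corner ^^ n) T)"
proof (cases "tri_area T = 0")
  case True
  then show ?thesis by (simp add: J_eq_infinity)
next
  case False
  then have area_n: "tri_area ((corner ^^ n) T) \<noteq> 0"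
    by (simp add: tri_area_corner_iterate)
  define x where "x = (cmod (vec_AC T))\<^sup>2 / tri_area T"
  define y where "y = (cmod (vec_AB ((corner ^^ n) T)))\<^sup>2 / tri_area ((corner ^^ n) T)"
  have "0 \<le> x" "0 \<le> y"
    by (simp_all add: x_def y_def tri_area_nonneg)
  have "M \<le> x \<or> M \<le> y"
  proof (rule ccontr)
    assume "\<not> (M \<le> x \<or> M \<le> y)"
    then have "x * y < M * M"
      using \<open>0 \<le> x\<close> \<open>0 \<le> y\<close> by (intro mult_strict_mono) auto
    then show False
      using norm_vec_product_corner_iterate[OF False, of n] assms(2)
      by (simp add: x_def y_def power2_eq_square)
  qed
  then show ?thesis
    using J_ge_norm_vec(2)[OF False] J_ge_norm_vec(1)[OF area_n]
    unfolding x_def y_def by (meson ereal_less_eq(3) order_trans)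
qed

lemma tri_chain_add_zeros:
  "(\<forall>i<n. \<omega> !! (k + i) = 0) \<Longrightarrow> tri_chain T0 \<omega> (k + n) = (corner ^^ n) (tri_chain T0 \<omega> k)"
  by (induction n) (auto simp: corner_def)

lemma limsup_eq_infinity_if_frequently_ge:
  fixes X :: "nat \<Rightarrow> ereal"
  assumes frequently_ge: "\<And>M. 0 < M \<Longrightarrow> \<exists>\<^sub>F n in sequentially. ereal M \<le> X n"
  shows "limsup X = \<infinity>"
proof (rule ereal_top)
  fix B
  show "ereal B \<le> limsup X"
  proof (rule ccontr)
    assume "\<not> ereal B \<le> limsup X"
    then have "\<forall>y > ereal B. \<forall>\<^sub>F n in sequentially. X n < y"
      by (simp flip: Limsup_le_iff)
    then have "\<forall>\<^sub>F n in sequentially. X n < ereal (max B 0 + 1)"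
      by simp
    moreover have "\<exists>\<^sub>F n in sequentially. ereal (max B 0 + 1) \<le> X n"
      by (rule frequently_ge) simp
    ultimately have "\<exists>\<^sub>F n in sequentially. ereal (max B 0 + 1) \<le> X n \<and> X n < ereal (max B 0 + 1)"
      by (intro frequently_eventually_frequently)
    then show False
      by (auto simp: frequently_sequentially)
  qed
qed

lemma limsup_J_tri_chain_eq_infinity:
  assumes runs: "\<forall>n. \<exists>\<^sub>F k in sequentially. \<forall>i<n. \<omega> !! (k + i) = 0"
  shows "limsup (\<lambda>k. J (tri_chain T0 \<omega> k)) = \<infinity>"
proof (rule limsup_eq_infinity_if_frequently_ge)
  fix M :: real
  assume "0 < M"
  obtain n where "M\<^sup>2 / 4 < (3/2) ^ n"
    using real_arch_pow[of "3/2" "M\<^sup>2 / 4"] by auto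
  then have large: "M\<^sup>2 < 4 * (3/2) ^ n"
    by simp
  show "\<exists>\<^sub>F k in sequentially. ereal M \<le> J (tri_chain T0 \<omega> k)"
    unfolding frequently_sequentially
  proof
    fix N
    obtain k where "N \<le> k" and "\<forall>i<n. \<omega> !! (k + i) = 0"
      using runs unfolding frequently_sequentially by blast
    then have "ereal M \<le> J (tri_chain T0 \<omega> k) \<or> ereal M \<le> J (tri_chain T0 \<omega> (k + n))"
      using J_or_J_corner_iterate_ge[OF \<open>0 < M\<close> large] by (simp add: tri_chain_add_zeros)
    with \<open>N \<le> k\<close> show "\<exists>k\<ge>N. ereal M \<le> J (tri_chain T0 \<omega> k)"
      using le_add1 order_trans by blast
  qed
qed

theorem proposition4:
  fixes T0 :: triangle
  assumes "nondegenerate_input T0"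
  shows "AE \<omega> in choices. limsup (\<lambda>n. J (tri_chain T0 \<omega> n)) = \<infinity>"
proof -
  have "AE \<omega> in choices. \<forall>n. \<exists>\<^sub>F k in sequentially. \<forall>i<n. \<omega> !! (k + i) \<in> {0}"
    unfolding choices_def
    by (rule prob_space.AE_frequently_run[OF prob_space_measure_pmf])
       (simp_all add: measure_pmf_single lessThan_empty_iff)
  then show ?thesis
    by eventually_elim (simp add: limsup_J_tri_chain_eq_infinity)
qed

end
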